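(* Consider the sampling-based safety filter described in the context, run in closed loop for $t=0,1,2,\dots$ with $\mathbf{x}_{t+1}=f(\mathbf{x}_t,\mathbf{u}^{\mathrm{safe}}_t)$ and arbitrary nominal inputs. Let $\mathcal{C}\subseteq\mathcal{X}$ be a safe control invariant set with a known invariance control law $\mathbf{u}^{\mathrm{inv}}:\mathcal{C}\to\mathcal{U}$ satisfying $f(\mathbf{x},\mathbf{u}^{\mathrm{inv}}(\mathbf{x}))\in\mathcal{C}$ for every $\mathbf{x}\in\mathcal{C}$. Suppose the sampling space is restricted to control sequences whose terminal state lies in $\mathcal{C}$, i.e., at every time $t$ every sampled sequence $U^i_{t+1}$, rolled out from $\mathbf{x}_{t+1}=f(\mathbf{x}_t,\mathbf{u}^{\mathrm{nom}}_t)$, has terminal state $\mathbf{x}^{U^i_{t+1}}_H\in\mathcal{C}$. If the filter does not intervene at $t=0$, i.e. $\mathbf{u}^{\mathrm{safe}}_0=\mathbf{u}^{\mathrm{nom}}_0$, then the filter guarantees safety at all timesteps $t\ge0$: for every $t\ge 0$ there exists a control sequence $U_{t+1}\in\mathcal{U}^H$ whose rollout from $\mathbf{x}_{t+1}=f(\mathbf{x}_t,\mathbf{u}^{\mathrm{safe}}_t)$ is safe.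
   Context: Consider a deterministic discrete-time system $\mathbf{x}_{t+1}=f(\mathbf{x}_t,\mathbf{u}_t)$ with states $\mathbf{x}_t\in\mathcal{X}$ and inputs $\mathbf{u}_t\in\mathcal{U}$. Let $l:\mathcal{X}\to\mathbb{R}$ be a level function and $\mathcal{L}=\{\mathbf{x}: l(\mathbf{x})\le 0\}$ the failure set. Fix a horizon $H\ge1$. For a state $\mathbf{x}$ and $U=(\mathbf{u}_0,\dots,\mathbf{u}_{H-1})\in\mathcal{U}^H$, the rollout is $\mathbf{x}^U_0=\mathbf{x}$, $\mathbf{x}^U_{k+1}=f(\mathbf{x}^U_k,\mathbf{u}_k)$, with terminal state $\mathbf{x}^U_H$; the trajectory is safe ($\mathcal{O}_\tau=1$) if $\mathbf{x}^U_k\notin\mathcal{L}$ for all $k\in\{0,\dots,H\}$, and its cost is $C(\tau)=\max_{k\in\{0,\dots,H\}}\{-l(\mathbf{x}^U_k)\}$ (so $C(\tau)<0$ iff the trajectory is safe). A set $\mathcal{C}\subseteq\mathcal{X}$ is a safe control invariant set if $\mathcal{C}\cap\mathcal{L}=\emptyset$ and for every $\mathbf{x}\in\mathcal{C}$ there is $\mathbf{u}^{\mathrm{inv}}(\mathbf{x})\in\mathcal{U}$ with $f(\mathbf{x},\mathbf{u}^{\mathrm{inv}}(\mathbf{x}))\in\mathcal{C}$. Safety filter at time $t$: inputs are the current state $\mathbf{x}_t$, a nominal input $\mathbf{u}^{\mathrm{nom}}_t\in\mathcal{U}$ and a stored sequence $U^{\mathrm{safe}}_t=(\bar{\mathbf{u}}_t,\dots,\bar{\mathbf{u}}_{t+H-1})$.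 It computes $\mathbf{x}^{\mathrm{pred}}=f(\mathbf{x}_t,\mathbf{u}^{\mathrm{nom}}_t)$, draws $N$ sequences $U^1_{t+1},\dots,U^N_{t+1}$ from a sampling distribution $\tilde q_{t+1}$ on $\mathcal{U}^H$, rolls each out from $\mathbf{x}^{\mathrm{pred}}$, and lets $i^*$ minimize the cost. If the minimum cost is negative (the filter does not intervene; written $\mathbf{u}^{\mathrm{safe}}_t=\mathbf{u}^{\mathrm{nom}}_t$), it outputs $\mathbf{u}^{\mathrm{safe}}_t=\mathbf{u}^{\mathrm{nom}}_t$ and stores $U^{\mathrm{safe}}_{t+1}=U^{i^*}_{t+1}$. Otherwise (the filter intervenes), it outputs $\mathbf{u}^{\mathrm{safe}}_t=\bar{\mathbf{u}}_t$ and stores the shifted sequence $U^{\mathrm{safe}}_{t+1}=(\bar{\mathbf{u}}_{t+1},\dots,\bar{\mathbf{u}}_{t+H-1},\mathbf{u}^{\mathrm{inv}}(\bar{\mathbf{x}}))$, where $\bar{\mathbf{x}}$ is the terminal state of the rollout of $U^{\mathrm{safe}}_t$ from $\mathbf{x}_t$, i.e., the appended last input keeps the system inside $\mathcal{C}$. The closed-loop system applies $\mathbf{u}^{\mathrm{safe}}_t$. *)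

theory Defs
  imports Complex_Main
begin

text \<open>Rollout of an input sequence U (a list; U in U^H means length U = H) from state x:
  the list of states x^U_0, ..., x^U_(length U). The terminal state is its last element.\<close>
fun rollout :: "('x \<Rightarrow> 'u \<Rightarrow> 'x) \<Rightarrow> 'x \<Rightarrow> 'u list \<Rightarrow> 'x list" where
  "rollout f x [] = [x]"
| "rollout f x (u # us) = x # rollout f (f x u) us"

definition terminal :: "('x \<Rightarrow> 'u \<Rightarrow> 'x) \<Rightarrow> 'x \<Rightarrow> 'u list \<Rightarrow> 'x" where
  "terminal f x U = last (rollout f x U)"

definition failure_set :: "('x \<Rightarrow> real) \<Rightarrow> 'x set" where
  "failure_set l = {x. l x \<le> 0}"

definition traj_safe :: "('x \<Rightarrow> 'u \<Rightarrow> 'x) \<Rightarrow> ('x \<Rightarrow> real) \<Rightarrow> 'x \<Rightarrow> 'u list \<Rightarrow> bool" where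
  "traj_safe f l x U \<longleftrightarrow> (\<forall>y \<in> set (rollout f x U). y \<notin> failure_set l)"

definition traj_cost :: "('x \<Rightarrow> 'u \<Rightarrow> 'x) \<Rightarrow> ('x \<Rightarrow> real) \<Rightarrow> 'x \<Rightarrow> 'u list \<Rightarrow> real" where
  "traj_cost f l x U = Max ((\<lambda>y. - l y) ` set (rollout f x U))"

definition safe_control_invariant ::
  "('x \<Rightarrow> 'u \<Rightarrow> 'x) \<Rightarrow> ('x \<Rightarrow> real) \<Rightarrow> 'x set \<Rightarrow> ('x \<Rightarrow> 'u) \<Rightarrow> bool" where
  "safe_control_invariant f l C uinv \<longleftrightarrow>
     C \<inter> failure_set l = {} \<and> (\<forall>x \<in> C. f x (uinv x) \<in> C)"

text \<open>Inputs: current state xt, nominal input unom,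
  stored sequence Us, samples S i (i < N) drawn for time t+1. Outputs: applied input us and
  new stored sequence Us'.\<close>
definition filter_step ::
  "('x \<Rightarrow> 'u \<Rightarrow> 'x) \<Rightarrow> ('x \<Rightarrow> real) \<Rightarrow> ('x \<Rightarrow> 'u) \<Rightarrow> nat \<Rightarrow> 'x \<Rightarrow> 'u \<Rightarrow> 'u list
   \<Rightarrow> (nat \<Rightarrow> 'u list) \<Rightarrow> 'u \<Rightarrow> 'u list \<Rightarrow> bool" where
  "filter_step f l uinv N xt unom Us S us Us' \<longleftrightarrow>
     (let xpred = f xt unom in
      \<exists>istar < N. (\<forall>j < N. traj_cost f l xpred (S istar) \<le> traj_cost f l xpred (S j)) \<and>
        (if traj_cost f l xpred (S istar) < 0
         then us = unom \<and> Us' = S istar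
         else us = hd Us \<and> Us' = tl Us @ [uinv (terminal f xt Us)]))"

definition filter_no_intervention ::
  "('x \<Rightarrow> 'u \<Rightarrow> 'x) \<Rightarrow> ('x \<Rightarrow> real) \<Rightarrow> nat \<Rightarrow> 'x \<Rightarrow> 'u \<Rightarrow> (nat \<Rightarrow> 'u list) \<Rightarrow> bool" where
  "filter_no_intervention f l N xt unom S \<longleftrightarrow>
     (\<exists>i < N. traj_cost f l (f xt unom) (S i) < 0)"

end

theory Submission
  imports Defs
begin

text \<open>The filter always keeps a stored input sequence of length H whose rollout from the
  current state is safe and ends in C. A non-intervening step stores a sampled sequence, safe
  because its cost is negative and ending in C because of the restricted sampling space. An
  intervening step applies the first stored input and appends the invariance input at the old
  terminal state, which keeps the shifted rollout safe and its terminal state in C. Since the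
  filter does not intervene at t = 0, this invariant holds from time 1 on.\<close>

lemma rollout_not_Nil: "rollout f x U \<noteq> []"
  by (induction U arbitrary: x) auto

lemma terminal_Cons: "terminal f x (u # us) = terminal f (f x u) us"
  by (simp add: terminal_def rollout_not_Nil)

lemma rollout_snoc:
  "rollout f x (us @ [v]) = rollout f x us @ [f (terminal f x us) v]"
  by (induction us arbitrary: x) (auto simp: terminal_def rollout_not_Nil)

lemma terminal_snoc: "terminal f x (us @ [v]) = f (terminal f x us) v"
  by (simp add: terminal_def rollout_snoc)

lemma traj_cost_neg_iff_traj_safe: "traj_cost f l x U < 0 \<longleftrightarrow> traj_safe f l x U"
proof -
  have "finite ((\<lambda>y. - l y) ` set (rollout f x U))"
    and "(\<lambda>y. - l y) ` set (rollout f x U) \<noteq> {}"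
    using rollout_not_Nil[of f x U] by auto
  then show ?thesis
    unfolding traj_cost_def traj_safe_def failure_set_def by (auto simp: Max_less_iff)
qed

definition safe_backup ::
  "('x \<Rightarrow> 'u \<Rightarrow> 'x) \<Rightarrow> ('x \<Rightarrow> real) \<Rightarrow> 'x set \<Rightarrow> nat \<Rightarrow> 'x \<Rightarrow> 'u list \<Rightarrow> bool" where
  "safe_backup f l C H x U \<longleftrightarrow> length U = H \<and> traj_safe f l x U \<and> terminal f x U \<in> C"

lemma safe_backup_shift:
  assumes "safe_control_invariant f l C uinv" and "safe_backup f l C H x (u # us)"
  shows "safe_backup f l C H (f x u) (us @ [uinv (terminal f x (u # us))])"
proof -
  let ?T = "terminal f (f x u) us"
  have safe: "traj_safe f l x (u # us)" and len: "length (u # us) = H" and "?T \<in> C"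
    using assms(2) by (auto simp: safe_backup_def terminal_Cons)
  then have next_in_C: "f ?T (uinv ?T) \<in> C" and "f ?T (uinv ?T) \<notin> failure_set l"
    using assms(1) unfolding safe_control_invariant_def by auto
  moreover have "traj_safe f l (f x u) us"
    using safe by (simp add: traj_safe_def)
  ultimately show ?thesis
    using len by (simp add: safe_backup_def terminal_Cons terminal_snoc traj_safe_def rollout_snoc)
qed

lemma filter_step_no_intervention:
  assumes "filter_step f l uinv N xt unom Us S us Us'"
    and "filter_no_intervention f l N xt unom S"
  obtains i where "i < N" "us = unom" "Us' = S i" "traj_safe f l (f xt unom) (S i)"
proof -
  obtain istar where "istar < N"
    and min: "\<forall>j < N. traj_cost f l (f xt unom) (S istar) \<le> traj_cost f l (f xt unom) (S j)"
    and choice: "if traj_cost f l (f xt unom) (S istar) < 0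
       then us = unom \<and> Us' = S istar
       else us = hd Us \<and> Us' = tl Us @ [uinv (terminal f xt Us)]"
    using assms(1) unfolding filter_step_def Let_def by blast
  have "traj_cost f l (f xt unom) (S istar) < 0"
    using assms(2) min unfolding filter_no_intervention_def by force
  with \<open>istar < N\<close> choice show ?thesis
    by (intro that[of istar]) (simp_all add: traj_cost_neg_iff_traj_safe)
qed

lemma filter_step_intervention:
  assumes "filter_step f l uinv N xt unom Us S us Us'"
    and "\<not> filter_no_intervention f l N xt unom S"
  shows "us = hd Us \<and> Us' = tl Us @ [uinv (terminal f xt Us)]"
  using assms unfolding filter_step_def filter_no_intervention_def Let_def by auto

lemma filter_step_safe_backup:
  assumes "safe_control_invariant f l C uinv" and "H \<ge> 1"
    and step: "filter_step f l uinv N xt unom Us S us Us'"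
    and samples: "\<And>i. i < N \<Longrightarrow> length (S i) = H \<and> terminal f (f xt unom) (S i) \<in> C"
    and backup: "filter_no_intervention f l N xt unom S \<or> safe_backup f l C H xt Us"
  shows "safe_backup f l C H (f xt us) Us'"
proof (cases "filter_no_intervention f l N xt unom S")
  case True
  with step obtain i where "i < N" "us = unom" "Us' = S i" "traj_safe f l (f xt unom) (S i)"
    by (rule filter_step_no_intervention)
  then show ?thesis
    using samples by (simp add: safe_backup_def)
next
  case False
  with backup have "safe_backup f l C H xt Us" by simp
  with \<open>H \<ge> 1\<close> obtain u us' where "Us = u # us'"
    unfolding safe_backup_def by (cases Us) auto
  with False step \<open>safe_backup f l C H xt Us\<close> show ?thesis
    using filter_step_intervention safe_backup_shift[OF assms(1)] by fastforce
qed

theorem proposition2: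
  fixes f :: "'x \<Rightarrow> 'u \<Rightarrow> 'x" and l :: "'x \<Rightarrow> real"
    and H N :: nat and C :: "'x set" and uinv :: "'x \<Rightarrow> 'u"
    and x :: "nat \<Rightarrow> 'x" and unom usafe :: "nat \<Rightarrow> 'u"
    and Usafe :: "nat \<Rightarrow> 'u list" and S :: "nat \<Rightarrow> nat \<Rightarrow> 'u list"
  assumes H: "H \<ge> 1" and N: "N \<ge> 1"
    and inv: "safe_control_invariant f l C uinv"
    and samples_len: "\<And>t i. i < N \<Longrightarrow> length (S t i) = H"
    and init_len: "length (Usafe 0) = H"
    and filter: "\<And>t. filter_step f l uinv N (x t) (unom t) (Usafe t) (S t) (usafe t) (Usafe (Suc t))"
    and closed_loop: "\<And>t. x (Suc t) = f (x t) (usafe t)"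
    and restricted: "\<And>t i. i < N \<Longrightarrow> terminal f (f (x t) (unom t)) (S t i) \<in> C"
    and no_int0: "filter_no_intervention f l N (x 0) (unom 0) (S 0)"
  shows "\<forall>t. \<exists>U. length U = H \<and> traj_safe f l (f (x t) (usafe t)) U"
proof
  fix t
  have "safe_backup f l C H (x (Suc t)) (Usafe (Suc t))"
  proof (induction t)
    case 0
    show ?case
      using filter_step_safe_backup[OF inv H filter] samples_len restricted no_int0 closed_loop
      by simp
  next
    case (Suc t)
    then show ?case
      using filter_step_safe_backup[OF inv H filter] samples_len restricted closed_loop[of "Suc t"]
      by simp
  qed
  then show "\<exists>U. length U = H \<and> traj_safe f l (f (x t) (usafe t)) U"
    using closed_loop unfolding safe_backup_def by metis
qed

end
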